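(* Let $\mathcal{H}$ be a complex Hilbert space of finite dimension $n\geq 2$, $m\geq 2$, and let $\rho$ be a density operator on $\mathcal{H}^{\otimes m}$. If $\rho$ is in symmetric state consensus (SSC), then $\rho$ is in reduced state consensus (RSC); and if $\rho$ is in RSC, then $\rho$ is in $\sigma$-expectation consensus ($\sigma$EC) for every operator $\sigma$ on $\mathcal{H}$. The converse implications do not hold in general: there exist (e.g. for $m=3$, $n=2$, $\sigma=\mathrm{diag}(1,-1)$) states that are RSC but not SSC, and states that are $\sigma$EC but not RSC.
   Context: For $X$ an operator on $\mathcal{H}$, $X^{(i)}=I^{\otimes(i-1)}\otimes X\otimes I^{\otimes(m-i)}$. For a permutation $\pi$ of $\{1,\dots,m\}$, $U_\pi$ is the unitary on $\mathcal{H}^{\otimes m}$ with $U_\pi(X_1\otimes\cdots\otimes X_m)U_\pi^\dagger=X_{\pi(1)}\otimes\cdots\otimes X_{\pi(m)}$ for all operators $X_i$. Definitions: $\rho$ is $\sigma$EC if $\mathrm{Tr}(\sigma^{(1)}\rho)=\cdots=\mathrm{Tr}(\sigma^{(m)}\rho)$; $\rho$ is RSC if the reduced states $\bar\rho_k=\mathrm{Tr}_{\bigotimes_{j\neq k}\mathcal{H}_j}(\rho)$ (partial trace over all factors except the $k$-th) satisfy $\bar\rho_1=\cdots=\bar\rho_m$; $\rho$ is SSC if $U_\pi\rho U_\pi^\dagger=\rho$ for every permutation $\pi$. *)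

theory Defs
  imports Complex_Main "HOL-Library.FuncSet" "HOL-Library.Complex_Order"
    "HOL-Combinatorics.Permutations"
begin

text \<open>Concrete model.  \<H> = C^n with orthonormal basis indexed by {0..<n}.
  The tensor power \<H>^{\<otimes>m} has the product basis indexed by the multi-indices
  x \<in> idx n m = PiE {0..<m} (\<lambda>_. {0..<n}).  Operators on \<H> are matrices
  nat \<Rightarrow> nat \<Rightarrow> complex (only entries on {0..<n} matter); operators on
  \<H>^{\<otimes>m} are matrices (nat \<Rightarrow> nat) \<Rightarrow> (nat \<Rightarrow> nat) \<Rightarrow> complex
  (only entries on idx n m matter).\<close>

definition idx :: "nat \<Rightarrow> nat \<Rightarrow> (nat \<Rightarrow> nat) set" where
  "idx n m = PiE {0..<m} (\<lambda>_. {0..<n})"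

type_synonym bop = "(nat \<Rightarrow> nat) \<Rightarrow> (nat \<Rightarrow> nat) \<Rightarrow> complex"

definition mmul :: "nat \<Rightarrow> nat \<Rightarrow> bop \<Rightarrow> bop \<Rightarrow> bop" where
  "mmul n m A B = (\<lambda>x y. \<Sum>z\<in>idx n m. A x z * B z y)"

definition adj :: "bop \<Rightarrow> bop" where
  "adj A = (\<lambda>x y. cnj (A y x))"

definition tr :: "nat \<Rightarrow> nat \<Rightarrow> bop \<Rightarrow> complex" where
  "tr n m A = (\<Sum>x\<in>idx n m. A x x)"

definition density :: "nat \<Rightarrow> nat \<Rightarrow> bop \<Rightarrow> bool" where
  "density n m \<rho> \<longleftrightarrow>
     (\<forall>v :: (nat \<Rightarrow> nat) \<Rightarrow> complex.
        0 \<le> (\<Sum>x\<in>idx n m. \<Sum>y\<in>idx n m. cnj (v x) * \<rho> x y * v y))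
     \<and> tr n m \<rho> = 1"

definition tensor :: "nat \<Rightarrow> (nat \<Rightarrow> nat \<Rightarrow> nat \<Rightarrow> complex) \<Rightarrow> bop" where
  "tensor m X = (\<lambda>x y. \<Prod>j<m. X j (x j) (y j))"

definition idop :: "nat \<Rightarrow> nat \<Rightarrow> complex" where
  "idop a b = (if a = b then 1 else 0)"

text \<open>X^{(i)} = I \<otimes> ... \<otimes> X \<otimes> ... \<otimes> I (X in slot i, 0-based).\<close>
definition embed :: "nat \<Rightarrow> nat \<Rightarrow> (nat \<Rightarrow> nat \<Rightarrow> complex) \<Rightarrow> bop" where
  "embed m i X = tensor m (\<lambda>j. if j = i then X else idop)"

text \<open>Permutation unitary: matrix entries U_\<pi>(x,y) = [y = x \<circ> \<pi>^{-1}], i.e. U_\<pi> e_y = e_{y \<circ> \<pi>}; it satisfies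
  U_\<pi> (X_0 \<otimes> ... \<otimes> X_{m-1}) U_\<pi>^\<dagger> = X_{\<pi> 0} \<otimes> ... \<otimes> X_{\<pi> (m-1)}.\<close>
definition Uperm :: "(nat \<Rightarrow> nat) \<Rightarrow> bop" where
  "Uperm \<pi> = (\<lambda>x y. if y = x \<circ> inv \<pi> then 1 else 0)"

definition reduced :: "nat \<Rightarrow> nat \<Rightarrow> bop \<Rightarrow> nat \<Rightarrow> nat \<Rightarrow> nat \<Rightarrow> complex" where
  "reduced n m \<rho> k = (\<lambda>a b.
     \<Sum>z\<in>PiE ({0..<m} - {k}) (\<lambda>_. {0..<n}). \<rho> (z(k := a)) (z(k := b)))"

definition sigmaEC :: "nat \<Rightarrow> nat \<Rightarrow> (nat \<Rightarrow> nat \<Rightarrow> complex) \<Rightarrow> bop \<Rightarrow> bool" where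
  "sigmaEC n m \<sigma> \<rho> \<longleftrightarrow>
     (\<forall>i<m. \<forall>j<m. tr n m (mmul n m (embed m i \<sigma>) \<rho>) = tr n m (mmul n m (embed m j \<sigma>) \<rho>))"

definition RSC :: "nat \<Rightarrow> nat \<Rightarrow> bop \<Rightarrow> bool" where
  "RSC n m \<rho> \<longleftrightarrow>
     (\<forall>k<m. \<forall>l<m. \<forall>a<n. \<forall>b<n. reduced n m \<rho> k a b = reduced n m \<rho> l a b)"

definition SSC :: "nat \<Rightarrow> nat \<Rightarrow> bop \<Rightarrow> bool" where
  "SSC n m \<rho> \<longleftrightarrow>
     (\<forall>\<pi>. \<pi> permutes {0..<m} \<longrightarrow>
        (\<forall>x\<in>idx n m. \<forall>y\<in>idx n m.
           mmul n m (mmul n m (Uperm \<pi>) \<rho>) (adj (Uperm \<pi>)) x y = \<rho> x y))"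

definition pauliZ :: "nat \<Rightarrow> nat \<Rightarrow> complex" where
  "pauliZ a b = (if a = b then (if a = 0 then 1 else -1) else 0)"

end

theory Submission imports Defs begin

text \<open>Conjugating \<open>\<rho>\<close> by the unitary of a permutation \<open>\<pi>\<close> permutes the tensor indices,
  \<open>\<rho>(x, y) \<mapsto> \<rho>(x \<circ> \<pi>\<^sup>-\<^sup>1, y \<circ> \<pi>\<^sup>-\<^sup>1)\<close>. So under SSC, \<open>\<rho>\<close> is invariant under
  transposing factors \<open>k\<close> and \<open>l\<close> in both indices, and reindexing the partial trace by that
  transposition turns \<open>\<rho>\<^sub>k\<close> into \<open>\<rho>\<^sub>l\<close>.
  Since \<open>\<sigma>\<^sup>(\<^sup>i\<^sup>)\<close> acts on factor \<open>i\<close> only, \<open>Tr(\<sigma>\<^sup>(\<^sup>i\<^sup>)\<rho>) = Tr(\<sigma> \<rho>\<^sub>i)\<close>, so RSC gives \<open>\<sigma>\<close>EC.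
  For the converses: the cat state \<open>(|001\<rangle> + |110\<rangle>)/\<surd>2\<close> has all reduced states \<open>I/2\<close> but is
  not invariant under exchanging factors 1 and 3, and the product state
  \<open>|+\<rangle>|+i\<rangle>|+\<rangle>\<close> has vanishing \<open>Z\<close>-expectation on each factor but a different reduced state
  on the middle one.\<close>

lemma mem_idx_iff:
  "x \<in> idx n m \<longleftrightarrow> (\<forall>i<m. x i < n) \<and> (\<forall>i\<ge>m. x i = undefined)"
  by (auto simp: idx_def PiE_iff extensional_def)

lemma finite_idx [simp]: "finite (idx n m)"
  by (simp add: idx_def finite_PiE)

lemma comp_permutes_in_idx:
  assumes "p permutes {0..<m}" "x \<in> idx n m"
  shows "x \<circ> p \<in> idx n m"
  using assms permutes_in_image[OF assms(1)] permutes_not_in[OF assms(1)]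
  by (auto simp: mem_idx_iff)

lemma fun_upd_in_idx: "x \<in> idx n m \<Longrightarrow> k < m \<Longrightarrow> b < n \<Longrightarrow> x(k := b) \<in> idx n m"
  by (auto simp: mem_idx_iff)

lemma sum_PiE_insert:
  assumes "x \<notin> S"
  shows "(\<Sum>g\<in>PiE (insert x S) T. f g) = (\<Sum>g\<in>PiE S T. \<Sum>y\<in>T x. f (g(x := y)))"
proof -
  have "(\<Sum>g\<in>PiE (insert x S) T. f g) = (\<Sum>(y, g)\<in>T x \<times> PiE S T. f (g(x := y)))"
    unfolding PiE_insert_eq
    by (subst sum.reindex[OF inj_combinator[OF assms]]) (simp add: case_prod_beta')
  also have "\<dots> = (\<Sum>y\<in>T x. \<Sum>g\<in>PiE S T. f (g(x := y)))"
    by (rule sum.cartesian_product[symmetric])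
  also have "\<dots> = (\<Sum>g\<in>PiE S T. \<Sum>y\<in>T x. f (g(x := y)))"
    by (rule sum.swap)
  finally show ?thesis .
qed

lemma sum_idx_coordinate:
  assumes "k < m"
  shows "(\<Sum>x\<in>idx n m. f x) = (\<Sum>z\<in>PiE ({0..<m} - {k}) (\<lambda>_. {0..<n}). \<Sum>c<n. f (z(k := c)))"
proof -
  have "insert k ({0..<m} - {k}) = {0..<m}" using assms by auto
  then have "(\<Sum>x\<in>idx n m. f x) = (\<Sum>x\<in>PiE (insert k ({0..<m} - {k})) (\<lambda>_. {0..<n}). f x)"
    by (simp only: idx_def)
  also have "\<dots> = (\<Sum>z\<in>PiE ({0..<m} - {k}) (\<lambda>_. {0..<n}). \<Sum>c\<in>{0..<n}. f (z(k := c)))"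
    by (rule sum_PiE_insert) simp
  finally show ?thesis by (simp only: atLeast0LessThan)
qed

lemma sum_idx_Suc: "(\<Sum>x\<in>idx n (Suc m). f x) = (\<Sum>x\<in>idx n m. \<Sum>c<n. f (x(m := c)))"
proof -
  have "(\<Sum>x\<in>idx n (Suc m). f x) = (\<Sum>x\<in>PiE (insert m {0..<m}) (\<lambda>_. {0..<n}). f x)"
    by (simp only: idx_def atLeast0_lessThan_Suc)
  also have "\<dots> = (\<Sum>x\<in>idx n m. \<Sum>c\<in>{0..<n}. f (x(m := c)))"
    unfolding idx_def by (rule sum_PiE_insert) simp
  finally show ?thesis by (simp only: atLeast0LessThan)
qed

lemma Uperm_conjugate:
  assumes "x \<circ> inv p \<in> idx n m" "y \<circ> inv p \<in> idx n m"
  shows "mmul n m (mmul n m (Uperm p) \<rho>) (adj (Uperm p)) x y = \<rho> (x \<circ> inv p) (y \<circ> inv p)"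
proof -
  have "cnj (of_bool P) = of_bool P" for P by simp
  moreover have "A \<inter> {z. z = a} = {a}" if "a \<in> A" for A and a :: "nat \<Rightarrow> nat"
    using that by auto
  ultimately show ?thesis
    using assms by (simp add: mmul_def Uperm_def adj_def of_bool_def[symmetric])
qed

lemma SSC_transpose_invariant:
  assumes "SSC n m \<rho>" "k < m" "l < m" "x \<in> idx n m" "y \<in> idx n m"
  shows "\<rho> (x \<circ> transpose k l) (y \<circ> transpose k l) = \<rho> x y"
proof -
  let ?t = "transpose k l"
  have t: "?t permutes {0..<m}" using assms(2,3) by (intro permutes_swap_id) auto
  have "mmul n m (mmul n m (Uperm ?t) \<rho>) (adj (Uperm ?t)) x y = \<rho> x y"
    using assms(1,4,5) t unfolding SSC_def by blast
  moreover have "inv ?t = ?t" by (simp add: transpose_involutory inv_unique_comp)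
  ultimately show ?thesis
    using Uperm_conjugate comp_permutes_in_idx[OF t] assms(4,5) by metis
qed

lemma reduced_eq_sum_idx:
  assumes "k < m" "a < n"
  shows "reduced n m \<rho> k a b = (\<Sum>x\<in>idx n m. if x k = a then \<rho> x (x(k := b)) else 0)"
proof -
  have "(\<Sum>x\<in>idx n m. if x k = a then \<rho> x (x(k := b)) else 0)
     = (\<Sum>z\<in>PiE ({0..<m} - {k}) (\<lambda>_. {0..<n}). \<Sum>c<n. if c = a then \<rho> (z(k := c)) (z(k := b)) else 0)"
    unfolding sum_idx_coordinate[OF assms(1)] by (intro sum.cong refl) simp
  also have "\<dots> = reduced n m \<rho> k a b"
    unfolding reduced_def using assms(2) by (intro sum.cong refl) (simp add: sum.delta)
  finally show ?thesis by simp
qed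

lemma fun_upd_comp_transpose:
  "(x \<circ> transpose k l)(k := b) = x(l := b) \<circ> transpose k l"
  by (auto simp: fun_eq_iff transpose_def)

lemma SSC_imp_RSC:
  assumes "SSC n m \<rho>"
  shows "RSC n m \<rho>"
  unfolding RSC_def
proof (intro allI impI)
  fix k l a b assume kl: "k < m" "l < m" and ab: "a < n" "b < n"
  let ?t = "transpose k l"
  have t: "?t permutes {0..<m}" using kl by (intro permutes_swap_id) auto
  have "(\<Sum>x\<in>idx n m. if x l = a then \<rho> x (x(l := b)) else 0)
      = (\<Sum>x\<in>idx n m. if x k = a then \<rho> x (x(k := b)) else 0)"
  proof (rule sum.reindex_bij_witness[where i="\<lambda>x. x \<circ> ?t" and j="\<lambda>x. x \<circ> ?t"])
    fix x assume x: "x \<in> idx n m"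
    show "x \<circ> ?t \<circ> ?t = x" by (simp add: comp_assoc)
    show "x \<circ> ?t \<in> idx n m" using t x by (rule comp_permutes_in_idx)
    have "\<rho> (x \<circ> ?t) ((x \<circ> ?t)(k := b)) = \<rho> x (x(l := b))"
      unfolding fun_upd_comp_transpose
      using SSC_transpose_invariant[OF assms kl x fun_upd_in_idx[OF x kl(2) ab(2)]] .
    then show "(if (x \<circ> ?t) k = a then \<rho> (x \<circ> ?t) ((x \<circ> ?t)(k := b)) else 0)
        = (if x l = a then \<rho> x (x(l := b)) else 0)" by simp
  next
    fix x assume x: "x \<in> idx n m"
    show "x \<circ> ?t \<circ> ?t = x" by (simp add: comp_assoc)
    show "x \<circ> ?t \<in> idx n m" using t x by (rule comp_permutes_in_idx)
  qed
  then show "reduced n m \<rho> k a b = reduced n m \<rho> l a b"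
    by (simp add: reduced_eq_sum_idx kl ab)
qed

lemma embed_fun_upd:
  assumes "i < m"
  shows "embed m i \<sigma> x (x(i := b)) = \<sigma> (x i) b"
proof -
  have "embed m i \<sigma> x (x(i := b))
      = \<sigma> (x i) b * (\<Prod>j\<in>{..<m} - {i}. (if j = i then \<sigma> else idop) (x j) ((x(i := b)) j))"
    unfolding embed_def tensor_def using assms by (subst prod.remove) auto
  also have "\<dots> = \<sigma> (x i) b"
    by (simp add: idop_def)
  finally show ?thesis .
qed

lemma embed_eq_0:
  assumes "j < m" "j \<noteq> i" "x j \<noteq> z j"
  shows "embed m i \<sigma> x z = 0"
  unfolding embed_def tensor_def
  using assms by (intro prod_zero) (auto simp: idop_def intro!: bexI[of _ j])

lemma idx_eq_fun_upd:
  assumes "x \<in> idx n m" "z \<in> idx n m" "\<And>j. j < m \<Longrightarrow> j \<noteq> i \<Longrightarrow> x j = z j"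
  shows "z = x(i := z i)"
proof
  fix j show "z j = (x(i := z i)) j"
    using assms by (cases "j < m") (auto simp: mem_idx_iff)
qed

lemma sum_embed_row:
  assumes i: "i < m" and x: "x \<in> idx n m"
  shows "(\<Sum>z\<in>idx n m. embed m i \<sigma> x z * \<rho> z x) = (\<Sum>b<n. \<sigma> (x i) b * \<rho> (x(i := b)) x)"
proof -
  let ?S = "(\<lambda>b. x(i := b)) ` {..<n}"
  have "(\<Sum>z\<in>idx n m. embed m i \<sigma> x z * \<rho> z x) = (\<Sum>z\<in>?S. embed m i \<sigma> x z * \<rho> z x)"
  proof (rule sum.mono_neutral_right[OF finite_idx], use fun_upd_in_idx[OF x i] in blast, rule ballI)
    fix z assume z: "z \<in> idx n m - ?S"
    have "z i < n" using z i by (auto simp: mem_idx_iff)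
    with z obtain j where "j < m" "j \<noteq> i" "x j \<noteq> z j"
      using idx_eq_fun_upd[OF x, of z i] by blast
    then show "embed m i \<sigma> x z * \<rho> z x = 0" by (simp add: embed_eq_0)
  qed
  also have "\<dots> = (\<Sum>b<n. embed m i \<sigma> x (x(i := b)) * \<rho> (x(i := b)) x)"
    by (rule sum.reindex_cong[where l="\<lambda>b. x(i := b)"])
      (auto intro!: inj_onI dest: fun_cong[where x=i])
  also have "\<dots> = (\<Sum>b<n. \<sigma> (x i) b * \<rho> (x(i := b)) x)"
    by (simp add: embed_fun_upd[OF i])
  finally show ?thesis .
qed

lemma tr_embed_mmul:
  assumes i: "i < m"
  shows "tr n m (mmul n m (embed m i \<sigma>) \<rho>) = (\<Sum>c<n. \<Sum>b<n. \<sigma> c b * reduced n m \<rho> i b c)"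
proof -
  let ?P = "PiE ({0..<m} - {i}) (\<lambda>_. {0..<n})"
  have "tr n m (mmul n m (embed m i \<sigma>) \<rho>) = (\<Sum>x\<in>idx n m. \<Sum>b<n. \<sigma> (x i) b * \<rho> (x(i := b)) x)"
    unfolding tr_def mmul_def by (intro sum.cong refl sum_embed_row[OF i])
  also have "\<dots> = (\<Sum>w\<in>?P. \<Sum>c<n. \<Sum>b<n. \<sigma> c b * \<rho> (w(i := b)) (w(i := c)))"
    by (simp add: sum_idx_coordinate[OF i])
  also have "\<dots> = (\<Sum>c<n. \<Sum>b<n. \<Sum>w\<in>?P. \<sigma> c b * \<rho> (w(i := b)) (w(i := c)))"
    by (simp add: sum.swap[of _ ?P])
  also have "\<dots> = (\<Sum>c<n. \<Sum>b<n. \<sigma> c b * reduced n m \<rho> i b c)"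
    by (simp add: reduced_def sum_distrib_left)
  finally show ?thesis .
qed

lemma RSC_imp_sigmaEC:
  assumes "RSC n m \<rho>"
  shows "sigmaEC n m \<sigma> \<rho>"
  unfolding sigmaEC_def
proof (intro allI impI)
  fix i j assume ij: "i < m" "j < m"
  have "reduced n m \<rho> i b c = reduced n m \<rho> j b c" if "b < n" "c < n" for b c
    using assms ij that unfolding RSC_def by blast
  then show "tr n m (mmul n m (embed m i \<sigma>) \<rho>) = tr n m (mmul n m (embed m j \<sigma>) \<rho>)"
    by (simp add: tr_embed_mmul ij)
qed

lemma idx_0: "idx n 0 = {\<lambda>_. undefined}"
  by (simp add: idx_def)

lemma sum_idx_2_3:
  "(\<Sum>x\<in>idx 2 3. f x) = (\<Sum>a<2. \<Sum>b<2. \<Sum>c<2. f ((\<lambda>_. undefined)(0 := a, 1 := b, 2 := c)))"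
proof -
  have "(\<Sum>x\<in>idx 2 3. f x) = (\<Sum>x\<in>idx 2 (Suc (Suc (Suc 0))). f x)"
    by (simp only: numeral_3_eq_3)
  also have "\<dots> = (\<Sum>x\<in>idx 2 0. \<Sum>a<2. \<Sum>b<2. \<Sum>c<2. f (x(0 := a, Suc 0 := b, Suc (Suc 0) := c)))"
    by (simp only: sum_idx_Suc)
  also have "\<dots> = (\<Sum>a<2. \<Sum>b<2. \<Sum>c<2. f ((\<lambda>_. undefined)(0 := a, Suc 0 := b, Suc (Suc 0) := c)))"
    by (simp only: idx_0 sum.insert finite.emptyI empty_iff not_False_eq_True sum.empty add_0_right)
  finally show ?thesis by (simp only: One_nat_def[symmetric] Suc_1)
qed

lemma density_rank_one:
  assumes "r \<ge> 0" and "tr n m (\<lambda>x y. of_real r * \<phi> x * cnj (\<phi> y)) = 1"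
  shows "density n m (\<lambda>x y. of_real r * \<phi> x * cnj (\<phi> y))"
  unfolding density_def
proof (intro conjI allI assms(2))
  fix v :: "(nat \<Rightarrow> nat) \<Rightarrow> complex"
  define s where "s = (\<Sum>x\<in>idx n m. cnj (v x) * \<phi> x)"
  have "(\<Sum>x\<in>idx n m. \<Sum>y\<in>idx n m. cnj (v x) * (of_real r * \<phi> x * cnj (\<phi> y)) * v y)
      = (\<Sum>x\<in>idx n m. \<Sum>y\<in>idx n m. (of_real r * (cnj (v x) * \<phi> x)) * (v y * cnj (\<phi> y)))"
    by (intro sum.cong refl) (simp add: mult_ac)
  also have "\<dots> = (\<Sum>x\<in>idx n m. of_real r * (cnj (v x) * \<phi> x)) * (\<Sum>y\<in>idx n m. v y * cnj (\<phi> y))"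
    by (rule sum_product[symmetric])
  also have "\<dots> = of_real r * (s * cnj s)"
    by (simp add: s_def sum_distrib_left[symmetric] mult.assoc)
  also have "\<dots> = of_real (r * ((Re s)\<^sup>2 + (Im s)\<^sup>2))"
    by (simp only: complex_mult_cnj of_real_mult)
  also have "0 \<le> \<dots>"
    using assms(1) by (simp add: less_eq_complex_def)
  finally show "0 \<le> (\<Sum>x\<in>idx n m. \<Sum>y\<in>idx n m. cnj (v x) * (of_real r * \<phi> x * cnj (\<phi> y)) * v y)" .
qed

definition psi_cat :: "(nat \<Rightarrow> nat) \<Rightarrow> complex" where
  "psi_cat x = of_bool (x 0 = 0 \<and> x 1 = 0 \<and> x 2 = 1) + of_bool (x 0 = 1 \<and> x 1 = 1 \<and> x 2 = 0)"

definition rho_cat :: bop where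
  "rho_cat = (\<lambda>x y. of_real (1/2) * psi_cat x * cnj (psi_cat y))"

text \<open>The unnormalised product state \<open>|+\<rangle> \<otimes> |+i\<rangle> \<otimes> |+\<rangle>\<close>.\<close>
definition psi_prod :: "(nat \<Rightarrow> nat) \<Rightarrow> complex" where
  "psi_prod x = \<i> ^ x 1"

definition rho_prod :: bop where
  "rho_prod = (\<lambda>x y. of_real (1/8) * psi_prod x * cnj (psi_prod y))"

lemma density_rho_cat: "density 2 3 rho_cat"
  unfolding rho_cat_def
  by (rule density_rank_one) (simp, unfold tr_def sum_idx_2_3, simp add: psi_cat_def numeral_2_eq_2)

lemma density_rho_prod: "density 2 3 rho_prod"
  unfolding rho_prod_def
  by (rule density_rank_one) (simp, unfold tr_def sum_idx_2_3, simp add: psi_prod_def numeral_2_eq_2)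

lemma reduced_rho_cat:
  assumes "k < 3" "a < 2" "b < 2"
  shows "reduced 2 3 rho_cat k a b = (if a = b then 1/2 else 0)"
proof -
  have "k = 0 \<or> k = 1 \<or> k = 2" "a = 0 \<or> a = 1" "b = 0 \<or> b = 1" using assms by auto
  then show ?thesis
    unfolding reduced_eq_sum_idx[OF assms(1,2)] sum_idx_2_3
    by (elim disjE) (simp_all add: rho_cat_def psi_cat_def numeral_2_eq_2)
qed

lemma reduced_rho_prod:
  assumes "k < 3" "a < 2" "b < 2"
  shows "reduced 2 3 rho_prod k a b = (if k = 1 then \<i> ^ a * cnj (\<i> ^ b) / 2 else 1/2)"
proof -
  have "k = 0 \<or> k = 1 \<or> k = 2" "a = 0 \<or> a = 1" "b = 0 \<or> b = 1" using assms by auto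
  then show ?thesis
    unfolding reduced_eq_sum_idx[OF assms(1,2)] sum_idx_2_3
    by (elim disjE) (simp_all add: rho_prod_def psi_prod_def numeral_2_eq_2)
qed

lemma RSC_rho_cat: "RSC 2 3 rho_cat"
  by (simp add: RSC_def reduced_rho_cat)

lemma not_SSC_rho_cat: "\<not> SSC 2 3 rho_cat"
proof
  assume "SSC 2 3 rho_cat"
  let ?x = "(\<lambda>_. undefined)(0 := 0, 1 := 0, 2 := 1) :: nat \<Rightarrow> nat"
  have "?x \<in> idx 2 3" by (auto simp: mem_idx_iff less_Suc_eq numeral_3_eq_3)
  then have "rho_cat (?x \<circ> transpose 0 2) (?x \<circ> transpose 0 2) = rho_cat ?x ?x"
    using SSC_transpose_invariant[OF \<open>SSC 2 3 rho_cat\<close>] by simp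
  then show False by (simp add: rho_cat_def psi_cat_def)
qed

lemma sigmaEC_pauliZ_rho_prod: "sigmaEC 2 3 pauliZ rho_prod"
proof -
  have "{..<2::nat} = {0, 1}" by auto
  then have "tr 2 3 (mmul 2 3 (embed 3 i pauliZ) rho_prod) = 0" if "i < 3" for i
    using that by (simp add: tr_embed_mmul pauliZ_def reduced_rho_prod)
  then show ?thesis by (simp add: sigmaEC_def)
qed

lemma not_RSC_rho_prod: "\<not> RSC 2 3 rho_prod"
proof
  assume "RSC 2 3 rho_prod"
  then have "reduced 2 3 rho_prod 0 0 1 = reduced 2 3 rho_prod 1 0 1" by (simp add: RSC_def)
  then show False by (simp add: reduced_rho_prod complex_eq_iff)
qed

theorem theorem1:
  fixes n m :: nat
  assumes "n \<ge> 2" and "m \<ge> 2"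
  shows "(\<forall>\<rho>. density n m \<rho> \<longrightarrow>
            (SSC n m \<rho> \<longrightarrow> RSC n m \<rho>) \<and>
            (RSC n m \<rho> \<longrightarrow> (\<forall>\<sigma>. sigmaEC n m \<sigma> \<rho>)))
       \<and> (\<exists>\<rho>. density 2 3 \<rho> \<and> RSC 2 3 \<rho> \<and> \<not> SSC 2 3 \<rho>)
       \<and> (\<exists>\<rho>. density 2 3 \<rho> \<and> sigmaEC 2 3 pauliZ \<rho> \<and> \<not> RSC 2 3 \<rho>)"
  using SSC_imp_RSC RSC_imp_sigmaEC
    density_rho_cat RSC_rho_cat not_SSC_rho_cat
    density_rho_prod sigmaEC_pauliZ_rho_prod not_RSC_rho_prod
  by blast

end
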